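(* The lower Vietoris monad $H$ on $\mathbf{Top}$ is observational.
   Context: $\mathbf{Top}$ is the category of topological spaces with product topologies. $HX$ is the set of closed subsets of $X$ (including $\emptyset$) with topology generated by the sets $\{C: C\cap U\neq\emptyset\}$ for $U\subseteq X$ open; $\eta_X(x)=\overline{\{x\}}$; $\mu_X(\mathcal{C})=\overline{\bigcup_{C\in\mathcal{C}}C}$; $Hf(C)=\overline{f(C)}$; commutative monoidal structure $\nabla(C,D)=C\times D$. For a commutative monad $T$ on a cartesian monoidal category: $\mathsf{Kl}(T)$ has morphisms $f:A\rightsquigarrow B$ corresponding to $f^\sharp:A\to TB$, composition $(g\circledcirc f)^\sharp=\mu\circ T(g^\sharp)\circ f^\sharp$, tensor $\otimes$ equal to $\times$ on objects with $(f\otimes g)^\sharp=\nabla\circ(f^\sharp\times g^\sharp)$; $\mathsf{force}_A^\sharp=1_{TA}$; $\mathsf{copy}_n^\sharp=\eta\circ\Delta_n:TX\to T((TX)^n)$; $\mathsf{samp}_n=\mathsf{force}^{\otimes n}\circledcirc\mathsf{copy}_n:TX\rightsquigarrow X^{\otimes n}$. $T$ is observational if for every $X$ the family $(\mathsf{samp}_n)_{n\in\mathbb{N}}$ is jointly monic in $\mathsf{Kl}(T)$. *)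

theory Defs
  imports "HOL-Analysis.Analysis"
begin

text \<open>Lower Vietoris space HX: closed subsets of X (including the empty set), topology
generated by the sets {C. C meets U} for U open; the whole carrier HX is also declared
open, so that the carrier of the generated topology is exactly the set of closed sets.\<close>
definition lower_vietoris :: "'a topology \<Rightarrow> 'a set topology" where
  "lower_vietoris X = topology_generated_by
     (insert {C. closedin X C} {{C. closedin X C \<and> C \<inter> U \<noteq> {}} | U. openin X U})"

definition lv_eta :: "'a topology \<Rightarrow> 'a \<Rightarrow> 'a set" where
  "lv_eta X x = X closure_of {x}"

definition lv_mu :: "'a topology \<Rightarrow> 'a set set \<Rightarrow> 'a set" where
  "lv_mu X \<C> = X closure_of (\<Union>\<C>)"

definition lv_map :: "'b topology \<Rightarrow> ('a \<Rightarrow> 'b) \<Rightarrow> 'a set \<Rightarrow> 'b set" where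
  "lv_map Y h C = Y closure_of (h ` C)"

text \<open>Kleisli composition: for f : A ~> B and g : B ~> Z (given by their sharps),
(g o f)^# = mu_Z o H(g^#) o f^#.\<close>
definition kcomp :: "'c topology \<Rightarrow> ('b \<Rightarrow> 'c set) \<Rightarrow> ('a \<Rightarrow> 'b set) \<Rightarrow> 'a \<Rightarrow> 'c set" where
  "kcomp Z g f = (\<lambda>a. lv_mu Z (lv_map (lower_vietoris Z) g (f a)))"

definition power_sp :: "'a topology \<Rightarrow> nat \<Rightarrow> (nat \<Rightarrow> 'a) topology" where
  "power_sp X n = product_topology (\<lambda>_. X) {..<n}"

definition copy_n :: "'a topology \<Rightarrow> nat \<Rightarrow> 'a set \<Rightarrow> (nat \<Rightarrow> 'a set) set" where
  "copy_n X n C = lv_eta (power_sp (lower_vietoris X) n) (restrict (\<lambda>_. C) {..<n})"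

text \<open>(force^{\<otimes>n})^# = n-fold nabla o (1 x ... x 1) : (HX)^n \<rightarrow> H(X^n),
the n-fold nabla being the product of the closed sets.\<close>
definition force_tensor_n :: "nat \<Rightarrow> (nat \<Rightarrow> 'a set) \<Rightarrow> (nat \<Rightarrow> 'a) set" where
  "force_tensor_n n Cs = PiE {..<n} Cs"

definition samp_n :: "'a topology \<Rightarrow> nat \<Rightarrow> 'a set \<Rightarrow> (nat \<Rightarrow> 'a) set" where
  "samp_n X n = kcomp (power_sp X n) (force_tensor_n n) (copy_n X n)"

end

(*
  The Kleisli extension of samp_n sends a closed family F of closed sets to the closure in X^n
  of the union of the powers C^n, C in F: indeed samp_n C = C^n, because the closure of {C}
  in HX consists of the closed subsets of C.  These power closures determine F.  If D is not
  in F then, F being closed, some basic neighbourhood {C. C meets U_0, ..., U_(n-1)} of D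
  in HX misses F; the open box U_0 x ... x U_(n-1) then meets D^n but no C^n with C in F,
  so D^n is not contained in the n-th power closure of F.
*)

theory Submission
  imports Defs
begin

lemma topspace_lower_vietoris: "topspace (lower_vietoris X) = {C. closedin X C}"
  unfolding lower_vietoris_def by auto

lemma openin_lower_vietoris_meets:
  "openin X U \<Longrightarrow> openin (lower_vietoris X) {C. closedin X C \<and> C \<inter> U \<noteq> {}}"
  unfolding lower_vietoris_def by (rule topology_generated_by_Basis) blast

definition lv_hitting :: "'a topology \<Rightarrow> 'a set set \<Rightarrow> 'a set set" where
  "lv_hitting X \<U> = {C. closedin X C \<and> (\<forall>U\<in>\<U>. C \<inter> U \<noteq> {})}"

lemma lower_vietoris_nhds_base:
  assumes "openin (lower_vietoris X) V" "D \<in> V"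
  obtains \<U> where "finite \<U>" "\<forall>U\<in>\<U>. openin X U" "D \<in> lv_hitting X \<U>" "lv_hitting X \<U> \<subseteq> V"
proof -
  have "generate_topology_on
      (insert {C. closedin X C} {{C. closedin X C \<and> C \<inter> U \<noteq> {}} | U. openin X U}) V"
    using assms(1) unfolding lower_vietoris_def openin_topology_generated_by_iff .
  then have "\<exists>\<U>. finite \<U> \<and> (\<forall>U\<in>\<U>. openin X U) \<and> D \<in> lv_hitting X \<U> \<and> lv_hitting X \<U> \<subseteq> V"
    using assms(2)
  proof (induction arbitrary: D)
    case Empty
    then show ?case by simp
  next
    case (Int a b)
    have "D \<in> a" "D \<in> b" using Int.prems by auto
    from Int.IH(1)[OF \<open>D \<in> a\<close>] obtain \<U> where
      "finite \<U>" "\<forall>U\<in>\<U>. openin X U" "D \<in> lv_hitting X \<U>" "lv_hitting X \<U> \<subseteq> a"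
      by blast
    moreover from Int.IH(2)[OF \<open>D \<in> b\<close>] obtain \<V> where
      "finite \<V>" "\<forall>U\<in>\<V>. openin X U" "D \<in> lv_hitting X \<V>" "lv_hitting X \<V> \<subseteq> b"
      by blast
    ultimately show ?case
      by (intro exI[of _ "\<U> \<union> \<V>"]) (auto simp: lv_hitting_def)
  next
    case (UN K)
    then obtain k where "k \<in> K" "D \<in> k" by blast
    from UN.IH[OF this] obtain \<U> where
      "finite \<U>" "\<forall>U\<in>\<U>. openin X U" "D \<in> lv_hitting X \<U>" "lv_hitting X \<U> \<subseteq> k"
      by blast
    with \<open>k \<in> K\<close> show ?case by blast
  next
    case (Basis s)
    then consider "s = {C. closedin X C}"
      | U where "openin X U" "s = {C. closedin X C \<and> C \<inter> U \<noteq> {}}"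
      by blast
    then show ?case
    proof cases
      case 1
      with Basis.prems show ?thesis
        by (intro exI[of _ "{}"]) (auto simp: lv_hitting_def)
    next
      case 2
      with Basis.prems show ?thesis
        by (intro exI[of _ "{U}"]) (auto simp: lv_hitting_def)
    qed
  qed
  with that show ?thesis by blast
qed

lemma openin_lower_vietoris_upclosed:
  assumes "openin (lower_vietoris X) V" "D \<in> V" "closedin X C" "D \<subseteq> C"
  shows "C \<in> V"
proof -
  from lower_vietoris_nhds_base[OF assms(1,2)] obtain \<U>
    where "D \<in> lv_hitting X \<U>" "lv_hitting X \<U> \<subseteq> V"
    by metis
  moreover from \<open>D \<in> lv_hitting X \<U>\<close> have "C \<in> lv_hitting X \<U>"
    using assms(3,4) unfolding lv_hitting_def by blast
  ultimately show ?thesis by blast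
qed

lemma closedin_if_in_lower_vietoris_closure_of:
  "E \<in> lower_vietoris X closure_of \<S> \<Longrightarrow> closedin X E"
  using closure_of_subset_topspace[of "lower_vietoris X" \<S>]
  by (auto simp: topspace_lower_vietoris)

lemma lower_vietoris_closure_of_meets:
  assumes "E \<in> lower_vietoris X closure_of \<S>" "openin X W" "E \<inter> W \<noteq> {}"
  shows "\<exists>C\<in>\<S>. C \<inter> W \<noteq> {}"
proof -
  have "\<forall>T. E \<in> T \<and> openin (lower_vietoris X) T \<longrightarrow> (\<exists>C. C \<in> \<S> \<and> C \<in> T)"
    using assms(1) unfolding in_closure_of by simp
  moreover have "E \<in> {C. closedin X C \<and> C \<inter> W \<noteq> {}}"
    using closedin_if_in_lower_vietoris_closure_of[OF assms(1)] assms(3) by simp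
  ultimately obtain C where "C \<in> \<S>" "C \<in> {C. closedin X C \<and> C \<inter> W \<noteq> {}}"
    using openin_lower_vietoris_meets[OF assms(2)] by meson
  then show ?thesis by auto
qed

lemma in_lower_vietoris_closure_of_imp_subset:
  assumes "E \<in> lower_vietoris X closure_of \<S>"
  shows "E \<subseteq> X closure_of \<Union>\<S>"
proof
  fix x assume "x \<in> E"
  then have "x \<in> topspace X"
    using closedin_subset[OF closedin_if_in_lower_vietoris_closure_of[OF assms]] by blast
  moreover have "\<exists>y. y \<in> \<Union>\<S> \<and> y \<in> T" if "x \<in> T" "openin X T" for T
  proof -
    have "E \<inter> T \<noteq> {}" using \<open>x \<in> E\<close> \<open>x \<in> T\<close> by blast
    then obtain C where "C \<in> \<S>" "C \<inter> T \<noteq> {}"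
      using lower_vietoris_closure_of_meets[OF assms \<open>openin X T\<close>] by blast
    then show ?thesis by blast
  qed
  ultimately show "x \<in> X closure_of \<Union>\<S>"
    unfolding in_closure_of by blast
qed

lemma lower_vietoris_closure_of_singleton:
  assumes "closedin X C"
  shows "lower_vietoris X closure_of {C} = {D. closedin X D \<and> D \<subseteq> C}"
proof (rule set_eqI, rule iffI)
  fix D assume D: "D \<in> lower_vietoris X closure_of {C}"
  have "D \<subseteq> C"
    using in_lower_vietoris_closure_of_imp_subset[OF D] closure_of_closedin[OF assms] by simp
  with closedin_if_in_lower_vietoris_closure_of[OF D] show "D \<in> {D. closedin X D \<and> D \<subseteq> C}"
    by simp
next
  fix D assume "D \<in> {D. closedin X D \<and> D \<subseteq> C}"
  then have "closedin X D" "D \<subseteq> C" by auto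
  then show "D \<in> lower_vietoris X closure_of {C}"
    unfolding in_closure_of topspace_lower_vietoris
    using openin_lower_vietoris_upclosed[OF _ _ assms] by blast
qed

lemma lv_mu_closure_of:
  assumes "\<S> \<subseteq> topspace (lower_vietoris X)"
  shows "lv_mu X (lower_vietoris X closure_of \<S>) = X closure_of \<Union>\<S>"
proof (rule antisym)
  show "lv_mu X (lower_vietoris X closure_of \<S>) \<subseteq> X closure_of \<Union>\<S>"
    unfolding lv_mu_def
    by (intro closure_of_minimal Union_least closedin_closure_of in_lower_vietoris_closure_of_imp_subset)
  show "X closure_of \<Union>\<S> \<subseteq> lv_mu X (lower_vietoris X closure_of \<S>)"
    unfolding lv_mu_def by (intro closure_of_mono Union_mono closure_of_subset assms)
qed

lemma kcomp_eq_closure_of_Union: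
  assumes "\<And>C. C \<in> f a \<Longrightarrow> closedin Z (h C)"
  shows "kcomp Z h f a = Z closure_of (\<Union>C\<in>f a. h C)"
proof -
  have "h ` f a \<subseteq> topspace (lower_vietoris Z)"
    using assms by (auto simp: topspace_lower_vietoris)
  then show ?thesis
    unfolding kcomp_def lv_map_def by (rule lv_mu_closure_of)
qed

lemma closedin_power_sp_PiE:
  "(\<And>i. i < n \<Longrightarrow> closedin X (S i)) \<Longrightarrow> closedin (power_sp X n) (PiE {..<n} S)"
  unfolding power_sp_def by (simp add: closedin_product_topology)

lemma copy_n_eq:
  assumes "closedin X C"
  shows "copy_n X n C = PiE {..<n} (\<lambda>_. {D. closedin X D \<and> D \<subseteq> C})"
proof -
  have "{restrict (\<lambda>_. C) {..<n}} = PiE {..<n} (\<lambda>i. {restrict (\<lambda>_. C) {..<n} i})"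
    by (rule PiE_singleton[symmetric]) simp
  also have "\<dots> = PiE {..<n} (\<lambda>_. {C})"
    by (rule PiE_cong) simp
  finally show ?thesis
    unfolding copy_n_def lv_eta_def power_sp_def
    by (simp only: closure_of_product_topology lower_vietoris_closure_of_singleton[OF assms])
qed

lemma samp_n_eq_power:
  assumes "closedin X C"
  shows "samp_n X n C = PiE {..<n} (\<lambda>_. C)"
proof -
  have closed: "closedin (power_sp X n) (force_tensor_n n Ds)" if "Ds \<in> copy_n X n C" for Ds
    using that unfolding copy_n_eq[OF assms] force_tensor_n_def
    by (intro closedin_power_sp_PiE) auto
  have "(\<Union>Ds\<in>copy_n X n C. force_tensor_n n Ds) = PiE {..<n} (\<lambda>_. C)"
  proof (rule antisym)
    show "(\<Union>Ds\<in>copy_n X n C. force_tensor_n n Ds) \<subseteq> PiE {..<n} (\<lambda>_. C)"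
      unfolding copy_n_eq[OF assms] force_tensor_n_def by (auto simp: PiE_iff)
    have "restrict (\<lambda>_. C) {..<n} \<in> copy_n X n C"
      using assms by (simp add: copy_n_eq)
    moreover have "force_tensor_n n (restrict (\<lambda>_. C) {..<n}) = PiE {..<n} (\<lambda>_. C)"
      unfolding force_tensor_n_def by (rule PiE_cong) simp
    ultimately show "PiE {..<n} (\<lambda>_. C) \<subseteq> (\<Union>Ds\<in>copy_n X n C. force_tensor_n n Ds)"
      by blast
  qed
  moreover have "closedin (power_sp X n) (PiE {..<n} (\<lambda>_. C))"
    using assms by (rule closedin_power_sp_PiE)
  ultimately show ?thesis
    unfolding samp_n_def by (simp add: kcomp_eq_closure_of_Union closed closure_of_closedin)
qed

definition power_closure :: "'a topology \<Rightarrow> nat \<Rightarrow> 'a set set \<Rightarrow> (nat \<Rightarrow> 'a) set" where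
  "power_closure X n \<F> = power_sp X n closure_of (\<Union>C\<in>\<F>. PiE {..<n} (\<lambda>_. C))"

lemma kcomp_samp_n_eq_power_closure:
  assumes "f a \<subseteq> topspace (lower_vietoris X)"
  shows "kcomp (power_sp X n) (samp_n X n) f a = power_closure X n (f a)"
proof -
  have samp: "samp_n X n C = PiE {..<n} (\<lambda>_. C)" if "C \<in> f a" for C
    using that assms by (intro samp_n_eq_power) (auto simp: topspace_lower_vietoris)
  have "closedin (power_sp X n) (samp_n X n C)" for C
    unfolding samp_n_def kcomp_def lv_mu_def by simp
  then have "kcomp (power_sp X n) (samp_n X n) f a = power_sp X n closure_of (\<Union>C\<in>f a. samp_n X n C)"
    by (rule kcomp_eq_closure_of_Union)
  also have "\<dots> = power_closure X n (f a)"
    unfolding power_closure_def by (simp add: samp cong: SUP_cong)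
  finally show ?thesis .
qed

lemma PiE_meets_power_iff_lv_hitting:
  "PiE {..<n} U \<inter> PiE {..<n} (\<lambda>_. C) \<noteq> {} \<longleftrightarrow> C \<in> lv_hitting X (U ` {..<n})"
  if "closedin X C"
  using that by (auto simp: PiE_Int PiE_eq_empty_iff lv_hitting_def)

lemma power_not_subset_power_closure:
  assumes "closedin (lower_vietoris X) \<F>" "closedin X D" "D \<notin> \<F>"
  obtains n where "\<not> PiE {..<n} (\<lambda>_. D) \<subseteq> power_closure X n \<F>"
proof -
  have "openin (lower_vietoris X) (topspace (lower_vietoris X) - \<F>)"
    using assms(1) by (rule openin_diff[OF openin_topspace])
  moreover have "D \<in> topspace (lower_vietoris X) - \<F>"
    using assms(2,3) by (simp add: topspace_lower_vietoris)
  ultimately obtain \<U> where \<U>: "finite \<U>" "\<forall>U\<in>\<U>. openin X U" "D \<in> lv_hitting X \<U>"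
    "lv_hitting X \<U> \<subseteq> topspace (lower_vietoris X) - \<F>"
    by (rule lower_vietoris_nhds_base)
  obtain n :: nat and U where U: "\<U> = U ` {..<n}"
    using \<U>(1) unfolding finite_conv_nat_seg_image lessThan_def[symmetric] by blast
  let ?W = "PiE {..<n} U"
  have "openin (power_sp X n) ?W"
    unfolding power_sp_def using \<U>(2) U by (simp add: openin_PiE)
  moreover have "?W \<inter> PiE {..<n} (\<lambda>_. C) = {}" if "C \<in> \<F>" for C
  proof -
    have "closedin X C"
      using closedin_subset[OF assms(1)] that by (auto simp: topspace_lower_vietoris)
    moreover have "C \<notin> lv_hitting X \<U>"
      using \<U>(4) that by blast
    ultimately show ?thesis
      unfolding U using PiE_meets_power_iff_lv_hitting by blast
  qed
  ultimately have "?W \<inter> power_closure X n \<F> = {}"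
    unfolding power_closure_def by (simp add: openin_Int_closure_of_eq_empty Int_UN_distrib)
  moreover have "?W \<inter> PiE {..<n} (\<lambda>_. D) \<noteq> {}"
    using \<U>(3) PiE_meets_power_iff_lv_hitting[OF assms(2)] unfolding U by blast
  ultimately show ?thesis
    using that by blast
qed

lemma subset_if_power_closure_subset:
  assumes "closedin (lower_vietoris X) \<F>" "\<G> \<subseteq> topspace (lower_vietoris X)"
    and "\<And>n. power_closure X n \<G> \<subseteq> power_closure X n \<F>"
  shows "\<G> \<subseteq> \<F>"
proof
  fix D assume "D \<in> \<G>"
  then have D: "closedin X D" using assms(2) by (auto simp: topspace_lower_vietoris)
  show "D \<in> \<F>"
  proof (rule ccontr)
    assume "D \<notin> \<F>"
    then obtain n where "\<not> PiE {..<n} (\<lambda>_. D) \<subseteq> power_closure X n \<F>"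
      using power_not_subset_power_closure[OF assms(1) D] by metis
    moreover have "PiE {..<n} (\<lambda>_. D) \<subseteq> topspace (power_sp X n)"
      using closedin_subset[OF closedin_power_sp_PiE[OF D]] .
    then have "PiE {..<n} (\<lambda>_. D) \<subseteq> power_closure X n \<G>"
      unfolding power_closure_def using \<open>D \<in> \<G>\<close>
      by (intro order_trans[OF _ closure_of_subset_Int]) blast
    ultimately show False using assms(3) by blast
  qed
qed

theorem theorem9p4:
  fixes X :: "'a topology" and A :: "'b topology" and f g :: "'b \<Rightarrow> 'a set set"
  assumes "continuous_map A (lower_vietoris (lower_vietoris X)) f"
    and "continuous_map A (lower_vietoris (lower_vietoris X)) g"
    and "\<forall>n. \<forall>a\<in>topspace A.
           kcomp (power_sp X n) (samp_n X n) f a = kcomp (power_sp X n) (samp_n X n) g a"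
  shows "\<forall>a\<in>topspace A. f a = g a"
proof
  fix a assume a: "a \<in> topspace A"
  have closed: "closedin (lower_vietoris X) (f a)" "closedin (lower_vietoris X) (g a)"
    using assms(1,2) a by (auto simp: continuous_map_def topspace_lower_vietoris)
  note in_topspace = closed[THEN closedin_subset]
  have eq: "power_closure X n (f a) = power_closure X n (g a)" for n
  proof -
    have "kcomp (power_sp X n) (samp_n X n) f a = kcomp (power_sp X n) (samp_n X n) g a"
      using assms(3) a by blast
    then show ?thesis
      by (simp only: kcomp_samp_n_eq_power_closure[of f a, OF in_topspace(1)]
          kcomp_samp_n_eq_power_closure[of g a, OF in_topspace(2)])
  qed
  show "f a = g a"
  proof (rule antisym)
    show "f a \<subseteq> g a"
      by (rule subset_if_power_closure_subset[OF closed(2) in_topspace(1)]) (simp add: eq)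
    show "g a \<subseteq> f a"
      by (rule subset_if_power_closure_subset[OF closed(1) in_topspace(2)]) (simp add: eq)
  qed
qed

end
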